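(* Algorithm 2 is monotonic. Moreover, for a connected graph $G$ with $n\ge2$ nodes, diameter $D$, and nonnegative integer loads with initial discrepancy $K$, after at most $(8nD+1)\ln(\lceil nK^2/(2D^2)\rceil)+2nD^2$ rounds when $K\ge 2D$ (and at most $2nD^2$ rounds when $K<2D$), hence in $O(nD\log(nK/D)+nD^2)$ time, the graph reaches a $1$-Balanced state, after which the loads never change.
   Context: $G=(V,E)$ is an undirected connected graph, $n=|V|$, $D$ its diameter; each node $u$ holds an integer load $load(u)\ge 0$. $L_{max},L_{min}$ denote the current maximum and minimum load and the discrepancy is $K=L_{max}-L_{min}$. A state is $1$-Balanced if every two adjacent nodes have loads differing by at most $1$. Algorithm 2 (single proposal, discrete) proceeds in synchronous rounds; in each round, using the loads at the start of the round: (1) every node $u$ having at least one neighbor $v$ with $load(v)\le load(u)-2$ picks the first neighbor $v$ (in a fixed order of its neighbors) maximizing $load(u)-load(v)$ and sends $v$ a proposal of value $p_{uv}=\lfloor (load(u)-load(v))/2\rfloor$; (2) every node that received at least one proposal accepts exactly one proposal of maximum value; (3) all accepted transfers are executed simultaneously (each accepted proposal $p_{wu}$ moves $p_{wu}$ from $w$ to $u$), and nodes report their new loads to neighbors. An algorithm is monotonic if in every execution (a) each load transfer goes from a higher-loaded node to a less-loaded one, and (b) the maximum load never increases and the minimum load never decreases. *)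

theory Defs
  imports Complex_Main
begin

text \<open>The fixed order of the neighbours of a node u
  is a distinct list nbrs u whose elements are exactly the neighbours of u.\<close>

definition graph :: "'a set \<Rightarrow> ('a \<Rightarrow> 'a \<Rightarrow> bool) \<Rightarrow> bool" where
  "graph V E \<longleftrightarrow> finite V \<and> (\<forall>u v. E u v \<longrightarrow> u \<in> V \<and> v \<in> V)
     \<and> (\<forall>u v. E u v \<longrightarrow> E v u) \<and> (\<forall>u. \<not> E u u)"

definition neighbor_order :: "'a set \<Rightarrow> ('a \<Rightarrow> 'a \<Rightarrow> bool) \<Rightarrow> ('a \<Rightarrow> 'a list) \<Rightarrow> bool" where
  "neighbor_order V E nbrs \<longleftrightarrow> (\<forall>u\<in>V. distinct (nbrs u) \<and> set (nbrs u) = {v. E u v})"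

definition walk :: "('a \<Rightarrow> 'a \<Rightarrow> bool) \<Rightarrow> 'a list \<Rightarrow> bool" where
  "walk E xs \<longleftrightarrow> xs \<noteq> [] \<and> (\<forall>i. Suc i < length xs \<longrightarrow> E (xs ! i) (xs ! Suc i))"

definition connected_graph :: "'a set \<Rightarrow> ('a \<Rightarrow> 'a \<Rightarrow> bool) \<Rightarrow> bool" where
  "connected_graph V E \<longleftrightarrow> (\<forall>u\<in>V. \<forall>v\<in>V. \<exists>xs. walk E xs \<and> hd xs = u \<and> last xs = v)"

definition gdist :: "('a \<Rightarrow> 'a \<Rightarrow> bool) \<Rightarrow> 'a \<Rightarrow> 'a \<Rightarrow> nat" where
  "gdist E u v = (LEAST k. \<exists>xs. walk E xs \<and> hd xs = u \<and> last xs = v \<and> length xs = Suc k)"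

definition diameter :: "'a set \<Rightarrow> ('a \<Rightarrow> 'a \<Rightarrow> bool) \<Rightarrow> nat" where
  "diameter V E = Max {gdist E u v | u v. u \<in> V \<and> v \<in> V}"

type_synonym 'a loads = "'a \<Rightarrow> int"

definition Lmax :: "'a set \<Rightarrow> 'a loads \<Rightarrow> int" where
  "Lmax V L = Max (L ` V)"

definition Lmin :: "'a set \<Rightarrow> 'a loads \<Rightarrow> int" where
  "Lmin V L = Min (L ` V)"

definition discrepancy :: "'a set \<Rightarrow> 'a loads \<Rightarrow> int" where
  "discrepancy V L = Lmax V L - Lmin V L"

definition one_balanced :: "('a \<Rightarrow> 'a \<Rightarrow> bool) \<Rightarrow> 'a loads \<Rightarrow> bool" where
  "one_balanced E L \<longleftrightarrow> (\<forall>u v. E u v \<longrightarrow> \<bar>L u - L v\<bar> \<le> 1)"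

definition proposes :: "('a \<Rightarrow> 'a list) \<Rightarrow> 'a loads \<Rightarrow> 'a \<Rightarrow> bool" where
  "proposes nbrs L u \<longleftrightarrow> (\<exists>v\<in>set (nbrs u). L v \<le> L u - 2)"

definition target :: "('a \<Rightarrow> 'a list) \<Rightarrow> 'a loads \<Rightarrow> 'a \<Rightarrow> 'a" where
  "target nbrs L u =
     (let m = Max ((\<lambda>v. L u - L v) ` set (nbrs u))
      in hd (filter (\<lambda>v. L u - L v = m) (nbrs u)))"

definition prop_val :: "'a loads \<Rightarrow> 'a \<Rightarrow> 'a \<Rightarrow> int" where
  "prop_val L u v = \<lfloor>real_of_int (L u - L v) / 2\<rfloor>"

definition proposal :: "('a \<Rightarrow> 'a list) \<Rightarrow> 'a loads \<Rightarrow> 'a \<Rightarrow> 'a \<Rightarrow> bool" where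
  "proposal nbrs L w u \<longleftrightarrow> proposes nbrs L w \<and> target nbrs L w = u"

text \<open>An acceptance choice: acc u = Some w means u accepts the proposal of w.\<close>
definition valid_accept :: "'a set \<Rightarrow> ('a \<Rightarrow> 'a list) \<Rightarrow> 'a loads \<Rightarrow> ('a \<Rightarrow> 'a option) \<Rightarrow> bool" where
  "valid_accept V nbrs L acc \<longleftrightarrow>
     (\<forall>u. u \<notin> V \<longrightarrow> acc u = None) \<and>
     (\<forall>u\<in>V. (acc u = None \<longleftrightarrow> \<not> (\<exists>w\<in>V. proposal nbrs L w u)) \<and>
             (\<forall>w. acc u = Some w \<longrightarrow> w \<in> V \<and> proposal nbrs L w u \<and>
                   (\<forall>w'\<in>V. proposal nbrs L w' u \<longrightarrow> prop_val L w' u \<le> prop_val L w u)))"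

definition apply_transfers :: "'a set \<Rightarrow> 'a loads \<Rightarrow> ('a \<Rightarrow> 'a option) \<Rightarrow> 'a loads" where
  "apply_transfers V L acc u =
     L u + (case acc u of Some w \<Rightarrow> prop_val L w u | None \<Rightarrow> 0)
         - (\<Sum>v\<in>V. if acc v = Some u then prop_val L u v else 0)"

text \<open>An execution: Ls t are the loads at the start of round t, accs t the acceptance
  choices made in round t.\<close>
definition execution :: "'a set \<Rightarrow> ('a \<Rightarrow> 'a list) \<Rightarrow> (nat \<Rightarrow> 'a loads) \<Rightarrow> (nat \<Rightarrow> 'a \<Rightarrow> 'a option) \<Rightarrow> bool" where
  "execution V nbrs Ls accs \<longleftrightarrow>
     (\<forall>t. valid_accept V nbrs (Ls t) (accs t) \<and> Ls (Suc t) = apply_transfers V (Ls t) (accs t))"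

definition monotonic_execution :: "'a set \<Rightarrow> (nat \<Rightarrow> 'a loads) \<Rightarrow> (nat \<Rightarrow> 'a \<Rightarrow> 'a option) \<Rightarrow> bool" where
  "monotonic_execution V Ls accs \<longleftrightarrow>
     (\<forall>t u w. accs t u = Some w \<longrightarrow> Ls t w > Ls t u) \<and>
     (\<forall>t. Lmax V (Ls (Suc t)) \<le> Lmax V (Ls t) \<and> Lmin V (Ls t) \<le> Lmin V (Ls (Suc t)))"

end

theory Submission imports Defs begin

text \<open>The potential is \<open>\<Phi> = \<Sum>\<^sub>u (load u - mean)\<^sup>2\<close>. A transfer of \<open>p\<close> from \<open>w\<close> to \<open>v\<close>
  lowers \<open>\<Sum>\<^sub>u load u\<^sup>2\<close> by \<open>2p(load w - load v - p)\<close>, and since every node sends and accepts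
  at most one proposal, one round lowers \<open>\<Phi>\<close> by at least the sum of these gains.
  On a shortest path from a maximum to a minimum node, every load level passed by a drop
  of at least 2 is covered by the transfer accepted by the target of the upper endpoint, so the
  gains of a round are at least \<open>K\<^sup>2/(8D)\<close> whenever \<open>K \<ge> 2D\<close>. As \<open>\<Phi> \<le> nK\<^sup>2\<close>, \<open>\<Phi>\<close> then
  shrinks by the factor \<open>1 - 1/(8nD)\<close>, while \<open>\<Phi> \<ge> K\<^sup>2/2 \<ge> 2D\<^sup>2\<close>; this bounds the first phase.
  Once \<open>K < 2D\<close> we have \<open>\<Phi> < 4nD\<^sup>2\<close>, and every round that is not 1-balanced lowers \<open>\<Phi>\<close> by at
  least 2, so a 1-balanced state, in which nobody proposes, is reached within \<open>2nD\<^sup>2\<close> rounds.\<close>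

lemma prop_val_eq_div: "prop_val L u v = (L u - L v) div 2"
  unfolding prop_val_def using floor_divide_of_int_eq[of "L u - L v" 2] by simp

lemma square_sum_le_card_mult_sum_squares:
  fixes q :: "'b \<Rightarrow> int"
  assumes "finite R"
  shows "(\<Sum>u\<in>R. q u)^2 \<le> int (card R) * (\<Sum>u\<in>R. (q u)^2)"
proof -
  have "0 \<le> (\<Sum>u\<in>R. \<Sum>v\<in>R. (q u - q v)^2)" by (intro sum_nonneg) auto
  also have "(\<Sum>u\<in>R. \<Sum>v\<in>R. (q u - q v)^2) =
     (\<Sum>u\<in>R. \<Sum>v\<in>R. (q u)^2) + (\<Sum>u\<in>R. \<Sum>v\<in>R. (q v)^2) - 2 * (\<Sum>u\<in>R. \<Sum>v\<in>R. q u * q v)"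
    by (simp add: power2_diff sum.distrib sum_subtractf sum_distrib_left algebra_simps)
  also have "\<dots> = 2 * (int (card R) * (\<Sum>u\<in>R. (q u)^2)) - 2 * (\<Sum>u\<in>R. q u)^2"
    by (simp add: power2_eq_square sum_distrib_left sum_distrib_right algebra_simps)
  finally show ?thesis by simp
qed

lemma sum_if_unique:
  assumes "finite A" and "\<And>v. v \<in> A \<Longrightarrow> P v \<Longrightarrow> v = t"
  shows "(\<Sum>v\<in>A. if P v then f v else (0::'b::comm_monoid_add)) = (if t \<in> A \<and> P t then f t else 0)"
proof -
  have "(\<Sum>v\<in>A. if P v then f v else 0) = (\<Sum>v\<in>A. if v = t then (if P t then f t else 0) else 0)"
  proof (rule sum.cong[OF refl])
    fix v assume "v \<in> A"
    then show "(if P v then f v else 0) = (if v = t then (if P t then f t else 0) else 0)"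
      using assms(2)[of v] by (cases "P v") auto
  qed
  also have "\<dots> = (if t \<in> A \<and> P t then f t else 0)" using assms(1) by (simp add: sum.delta)
  finally show ?thesis .
qed

lemma list_threshold_crossing:
  assumes "xs \<noteq> []" and "f (hd xs) > \<theta>" and "f (last xs) \<le> (\<theta>::'b::linorder)"
  shows "\<exists>i. Suc i < length xs \<and> f (xs ! Suc i) \<le> \<theta> \<and> \<theta> < f (xs ! i)"
  using assms
proof (induction xs)
  case Nil
  then show ?case by simp
next
  case (Cons x xs)
  show ?case
  proof (cases "xs = [] \<or> f (hd xs) \<le> \<theta>")
    case True
    with Cons.prems show ?thesis by (intro exI[of _ 0]) (auto simp: hd_conv_nth split: if_split_asm)
  next
    case False
    with Cons.prems have "\<exists>i. Suc i < length xs \<and> f (xs ! Suc i) \<le> \<theta> \<and> \<theta> < f (xs ! i)"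
      by (intro Cons.IH) auto
    then obtain i where "Suc i < length xs" "f (xs ! Suc i) \<le> \<theta>" "\<theta> < f (xs ! i)" by blast
    then show ?thesis by (intro exI[of _ "Suc i"]) auto
  qed
qed

lemma interval_length_le_card_cover:
  fixes a b :: int and c d :: "'b \<Rightarrow> int"
  assumes cover: "{a..<b} \<subseteq> (\<Union>u\<in>R. {c u..<c u + d u}) \<union> S"
    and fin: "finite R" "finite S" and d_nonneg: "\<And>u. u \<in> R \<Longrightarrow> 0 \<le> d u"
  shows "b - a \<le> (\<Sum>u\<in>R. d u) + int (card S)"
proof -
  have "nat (b - a) \<le> card ((\<Union>u\<in>R. {c u..<c u + d u}) \<union> S)" using card_mono[OF _ cover] fin by simp
  also have "\<dots> \<le> card (\<Union>u\<in>R. {c u..<c u + d u}) + card S" by (rule card_Un_le)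
  also have "\<dots> \<le> (\<Sum>u\<in>R. card {c u..<c u + d u}) + card S" by (intro add_right_mono card_UN_le fin(1))
  finally have "int (nat (b - a)) \<le> int ((\<Sum>u\<in>R. card {c u..<c u + d u}) + card S)"
    by (simp only: of_nat_le_iff)
  also have "\<dots> = (\<Sum>u\<in>R. d u) + int (card S)"
    unfolding of_nat_add of_nat_sum using d_nonneg by (simp cong: sum.cong)
  finally show ?thesis by linarith
qed

subsection \<open>Graphs\<close>

lemma shortest_walk_exists:
  assumes "connected_graph V E" and "u \<in> V" and "v \<in> V"
  shows "\<exists>xs. walk E xs \<and> hd xs = u \<and> last xs = v \<and> length xs = Suc (gdist E u v)"
proof -
  from assms obtain xs where xs: "walk E xs" "hd xs = u" "last xs = v"
    unfolding connected_graph_def by blast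
  then have "length xs = Suc (length xs - 1)" unfolding walk_def by auto
  with xs have "\<exists>k xs'. walk E xs' \<and> hd xs' = u \<and> last xs' = v \<and> length xs' = Suc k" by blast
  then show ?thesis unfolding gdist_def by (rule LeastI_ex)
qed

lemma gdist_le_diameter:
  assumes "finite V" and "u \<in> V" and "v \<in> V"
  shows "gdist E u v \<le> diameter V E"
proof -
  have "{gdist E u v | u v. u \<in> V \<and> v \<in> V} = (\<lambda>(u,v). gdist E u v) ` (V \<times> V)" by auto
  then show ?thesis unfolding diameter_def using assms by (intro Max_ge) auto
qed

lemma diameter_ge_one:
  assumes "finite V" and "connected_graph V E" and "card V \<ge> 2"
  shows "diameter V E \<ge> 1"
proof -
  have "\<not> card V \<le> Suc 0" using assms(3) by simp
  then obtain u v where uv: "u \<in> V" "v \<in> V" "u \<noteq> v"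
    using card_le_Suc0_iff_eq[OF assms(1)] by blast
  from shortest_walk_exists[OF assms(2) uv(1,2)] obtain xs where
    xs: "walk E xs" "hd xs = u" "last xs = v" "length xs = Suc (gdist E u v)" by blast
  have "gdist E u v \<noteq> 0"
  proof
    assume "gdist E u v = 0"
    then obtain x where "xs = [x]" using xs(4) by (cases xs) auto
    with xs uv show False by simp
  qed
  with gdist_le_diameter[OF assms(1) uv(1,2), of E] show ?thesis by linarith
qed

subsection \<open>Loads and the quadratic potential\<close>

lemma Lmin_le_load: "finite V \<Longrightarrow> u \<in> V \<Longrightarrow> Lmin V L \<le> L u"
  and load_le_Lmax: "finite V \<Longrightarrow> u \<in> V \<Longrightarrow> L u \<le> Lmax V L"
  by (auto simp: Lmin_def Lmax_def)

lemma sum_sq_dev_eq: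
  assumes "real (card V) * a = real_of_int S" and "(\<Sum>u\<in>V. L u) = S"
  shows "(\<Sum>u\<in>V. (real_of_int (L u) - a)^2) = real_of_int (\<Sum>u\<in>V. (L u)^2) - a * real_of_int S"
proof -
  have "(\<Sum>u\<in>V. (real_of_int (L u) - a)^2)
      = (\<Sum>u\<in>V. real_of_int (L u)^2) - 2 * a * (\<Sum>u\<in>V. real_of_int (L u)) + real (card V) * a^2"
    by (simp add: power2_diff sum.distrib sum_subtractf sum_distrib_left mult_ac)
  also have "(\<Sum>u\<in>V. real_of_int (L u)) = real_of_int S" using assms(2) by (metis of_int_sum)
  also have "real (card V) * a^2 = a * real_of_int S" using assms(1) by (simp add: power2_eq_square)
  finally show ?thesis by simp
qed

context
  fixes V :: "'a set" and L :: "'a loads"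
  assumes finite_V: "finite V" and V_nonempty: "V \<noteq> {}"
begin

lemma Lmin_attained: "\<exists>y\<in>V. L y = Lmin V L"
proof -
  have "Lmin V L \<in> L ` V" unfolding Lmin_def using finite_V V_nonempty by (intro Min_in) auto
  then show ?thesis by (metis imageE)
qed

lemma Lmax_attained: "\<exists>x\<in>V. L x = Lmax V L"
proof -
  have "Lmax V L \<in> L ` V" unfolding Lmax_def using finite_V V_nonempty by (intro Max_in) auto
  then show ?thesis by (metis imageE)
qed

lemma mean_between_Lmin_Lmax:
  assumes mean: "real (card V) * a = real_of_int (\<Sum>u\<in>V. L u)"
  shows "real_of_int (Lmin V L) \<le> a" and "a \<le> real_of_int (Lmax V L)"
proof -
  have card_pos: "real (card V) > 0" using finite_V V_nonempty by (simp add: card_gt_0_iff)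
  have "(\<Sum>u\<in>V. L u) \<le> int (card V) * Lmax V L"
    using sum_mono[of V L "\<lambda>_. Lmax V L"] load_le_Lmax[OF finite_V] by simp
  then have "real (card V) * a \<le> real (card V) * real_of_int (Lmax V L)"
    unfolding mean by (metis of_int_le_iff of_int_mult of_int_of_nat_eq)
  with card_pos show "a \<le> real_of_int (Lmax V L)" by simp
  have "int (card V) * Lmin V L \<le> (\<Sum>u\<in>V. L u)"
    using sum_mono[of V "\<lambda>_. Lmin V L" L] Lmin_le_load[OF finite_V] by simp
  then have "real (card V) * real_of_int (Lmin V L) \<le> real (card V) * a"
    unfolding mean by (metis of_int_le_iff of_int_mult of_int_of_nat_eq)
  with card_pos show "real_of_int (Lmin V L) \<le> a" by simp
qed

lemma sum_sq_dev_le_card_mult_discrepancy_sq: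
  assumes mean: "real (card V) * a = real_of_int (\<Sum>u\<in>V. L u)"
  shows "(\<Sum>u\<in>V. (real_of_int (L u) - a)^2) \<le> real (card V) * real_of_int (discrepancy V L)^2"
proof -
  have "(\<Sum>u\<in>V. (real_of_int (L u) - a)^2) \<le> (\<Sum>u\<in>V. real_of_int (discrepancy V L)^2)"
  proof (rule sum_mono)
    fix u assume "u \<in> V"
    with mean_between_Lmin_Lmax[OF mean] Lmin_le_load[OF finite_V, of u L] load_le_Lmax[OF finite_V, of u L]
    have "\<bar>real_of_int (L u) - a\<bar> \<le> \<bar>real_of_int (discrepancy V L)\<bar>"
      unfolding discrepancy_def by auto
    then show "(real_of_int (L u) - a)^2 \<le> real_of_int (discrepancy V L)^2"
      by (simp add: abs_le_square_iff)
  qed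
  then show ?thesis by simp
qed

lemma half_discrepancy_sq_le_sum_sq_dev:
  "real_of_int (discrepancy V L)^2 / 2 \<le> (\<Sum>u\<in>V. (real_of_int (L u) - a)^2)"
proof -
  obtain x y where x: "x \<in> V" "L x = Lmax V L" and y: "y \<in> V" "L y = Lmin V L"
    using Lmax_attained Lmin_attained by blast
  let ?p = "real_of_int (L x)" and ?q = "real_of_int (L y)"
  have K: "real_of_int (discrepancy V L) = ?p - ?q" unfolding discrepancy_def x(2) y(2) by simp
  show ?thesis
  proof (cases "x = y")
    case True
    then show ?thesis unfolding K by (simp add: sum_nonneg)
  next
    case False
    have "2 * ((?p - a)^2 + (?q - a)^2) = (?p - ?q)^2 + (?p + ?q - 2 * a)^2"
      by (simp add: power2_eq_square algebra_simps)
    then have "(?p - ?q)^2 / 2 \<le> (?p - a)^2 + (?q - a)^2"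
      using zero_le_power2[of "?p + ?q - 2 * a"] by (simp add: field_simps)
    also have "\<dots> = (\<Sum>u\<in>{x,y}. (real_of_int (L u) - a)^2)" using False by simp
    also have "\<dots> \<le> (\<Sum>u\<in>V. (real_of_int (L u) - a)^2)"
      using finite_V x y by (intro sum_mono2) auto
    finally show ?thesis unfolding K .
  qed
qed

end

subsection \<open>One round of Algorithm 2\<close>

locale load_balancing =
  fixes V :: "'a set" and E :: "'a \<Rightarrow> 'a \<Rightarrow> bool" and nbrs :: "'a \<Rightarrow> 'a list"
  assumes graph: "graph V E" and neighbor_order: "neighbor_order V E nbrs"
begin

lemma finite_V: "finite V"
  and edge_in_V: "E u v \<Longrightarrow> u \<in> V \<and> v \<in> V"
  and edge_sym: "E u v \<Longrightarrow> E v u"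
  using graph unfolding graph_def by auto

lemma set_nbrs: "u \<in> V \<Longrightarrow> set (nbrs u) = {v. E u v}"
  using neighbor_order unfolding neighbor_order_def by auto

lemma target_spec:
  assumes u: "u \<in> V" and p: "proposes nbrs L u"
  shows target_in_nbrs: "target nbrs L u \<in> set (nbrs u)"
    and target_minimal: "\<And>v. v \<in> set (nbrs u) \<Longrightarrow> L (target nbrs L u) \<le> L v"
    and target_load_le: "L (target nbrs L u) \<le> L u - 2"
proof -
  define m where "m = Max ((\<lambda>v. L u - L v) ` set (nbrs u))"
  from p obtain v0 where v0: "v0 \<in> set (nbrs u)" "L v0 \<le> L u - 2" unfolding proposes_def by auto
  then have "m \<in> (\<lambda>v. L u - L v) ` set (nbrs u)" unfolding m_def by (intro Max_in) auto
  then have "filter (\<lambda>v. L u - L v = m) (nbrs u) \<noteq> []" by (auto simp: filter_empty_conv)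
  then have "target nbrs L u \<in> set (filter (\<lambda>v. L u - L v = m) (nbrs u))"
    unfolding target_def m_def Let_def by (rule hd_in_set)
  then have t: "target nbrs L u \<in> set (nbrs u)" "L u - L (target nbrs L u) = m" by auto
  have m_ge: "\<And>v. v \<in> set (nbrs u) \<Longrightarrow> L u - L v \<le> m" unfolding m_def by auto
  show "target nbrs L u \<in> set (nbrs u)" by (fact t(1))
  show "\<And>v. v \<in> set (nbrs u) \<Longrightarrow> L (target nbrs L u) \<le> L v" using t(2) m_ge by force
  show "L (target nbrs L u) \<le> L u - 2" using t(2) m_ge[OF v0(1)] v0(2) by linarith
qed

lemma target_in_V: "u \<in> V \<Longrightarrow> proposes nbrs L u \<Longrightarrow> target nbrs L u \<in> V"
  using target_in_nbrs set_nbrs edge_in_V by blast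

lemma proposes_if_steep_edge: "E u v \<Longrightarrow> L v \<le> L u - 2 \<Longrightarrow> proposes nbrs L u"
  using set_nbrs edge_in_V unfolding proposes_def by blast

lemma steep_edge_target_in_V: "E x y \<Longrightarrow> L y \<le> L x - 2 \<Longrightarrow> target nbrs L x \<in> V"
  using edge_in_V proposes_if_steep_edge target_in_V by blast

lemma accepted_proposal:
  assumes va: "valid_accept V nbrs L acc" and a: "acc u = Some w"
  shows "w \<in> V \<and> u \<in> V \<and> proposes nbrs L w \<and> target nbrs L w = u \<and> L w - L u \<ge> 2
     \<and> prop_val L w u \<ge> 1 \<and> 2 * prop_val L w u \<le> L w - L u \<and> L w - L u \<le> 2 * prop_val L w u + 1
     \<and> (\<forall>w'\<in>V. proposal nbrs L w' u \<longrightarrow> prop_val L w' u \<le> prop_val L w u)"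
proof -
  have u: "u \<in> V" using va a unfolding valid_accept_def by (metis option.distinct(1))
  with va a have w: "w \<in> V" "proposes nbrs L w" "target nbrs L w = u"
    and max: "\<forall>w'\<in>V. proposal nbrs L w' u \<longrightarrow> prop_val L w' u \<le> prop_val L w u"
    unfolding valid_accept_def proposal_def by blast+
  with target_load_le[OF w(1,2)] u show ?thesis by (auto simp: prop_val_eq_div)
qed

lemma proposal_received_accepts:
  "valid_accept V nbrs L acc \<Longrightarrow> w \<in> V \<Longrightarrow> proposes nbrs L w \<Longrightarrow> acc (target nbrs L w) \<noteq> None"
  using target_in_V unfolding valid_accept_def proposal_def by blast

definition inflow :: "'a loads \<Rightarrow> ('a \<Rightarrow> 'a option) \<Rightarrow> 'a \<Rightarrow> int" where
  "inflow L acc u = (case acc u of Some w \<Rightarrow> prop_val L w u | None \<Rightarrow> 0)"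

definition outflow :: "'a loads \<Rightarrow> ('a \<Rightarrow> 'a option) \<Rightarrow> 'a \<Rightarrow> int" where
  "outflow L acc u = (\<Sum>v\<in>V. if acc v = Some u then prop_val L u v else 0)"

text \<open>The decrease of \<open>load w\<^sup>2 + load v\<^sup>2\<close> caused by moving \<open>p\<close> from \<open>w\<close> to \<open>v\<close>.\<close>
definition transfer_gain :: "'a loads \<Rightarrow> ('a \<Rightarrow> 'a option) \<Rightarrow> 'a \<Rightarrow> int" where
  "transfer_gain L acc v =
     (case acc v of Some w \<Rightarrow> 2 * prop_val L w v * (L w - L v - prop_val L w v) | None \<Rightarrow> 0)"

lemma apply_transfers_eq: "apply_transfers V L acc u = L u + inflow L acc u - outflow L acc u"
  unfolding apply_transfers_def inflow_def outflow_def by simp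

lemma inflow_nonneg: "valid_accept V nbrs L acc \<Longrightarrow> inflow L acc u \<ge> 0"
  unfolding inflow_def by (cases "acc u") (auto dest: accepted_proposal)

lemma outflow_nonneg: "valid_accept V nbrs L acc \<Longrightarrow> outflow L acc u \<ge> 0"
  unfolding outflow_def by (intro sum_nonneg) (auto dest: accepted_proposal)

lemma outflow_eq:
  assumes "valid_accept V nbrs L acc"
  shows "outflow L acc u =
    (if target nbrs L u \<in> V \<and> acc (target nbrs L u) = Some u then prop_val L u (target nbrs L u) else 0)"
  unfolding outflow_def using accepted_proposal[OF assms]
  by (intro sum_if_unique[OF finite_V]) auto

lemma sum_by_receivers:
  assumes va: "valid_accept V nbrs L acc"
  shows "(\<Sum>u\<in>V. \<Sum>v\<in>V. if acc v = Some u then g u v else (0::int)) =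
         (\<Sum>v\<in>V. case acc v of Some w \<Rightarrow> g w v | None \<Rightarrow> 0)"
proof -
  have "(\<Sum>u\<in>V. if acc v = Some u then g u v else 0) = (case acc v of Some w \<Rightarrow> g w v | None \<Rightarrow> 0)"
    for v
  proof (cases "acc v")
    case (Some w)
    with accepted_proposal[OF va Some] show ?thesis
      by (subst sum_if_unique[OF finite_V, of _ w]) auto
  qed simp
  then show ?thesis by (subst sum.swap) simp
qed

lemma sum_mult_inflow:
  "(\<Sum>u\<in>V. f u * inflow L acc u) = (\<Sum>v\<in>V. case acc v of Some w \<Rightarrow> prop_val L w v * f v | None \<Rightarrow> 0)"
  unfolding inflow_def by (rule sum.cong) (auto split: option.split)

lemma sum_mult_outflow:
  assumes "valid_accept V nbrs L acc"
  shows "(\<Sum>u\<in>V. f u * outflow L acc u) = (\<Sum>v\<in>V. case acc v of Some w \<Rightarrow> prop_val L w v * f w | None \<Rightarrow> 0)"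
  unfolding outflow_def sum_distrib_left sum_by_receivers[OF assms, symmetric]
  by (intro sum.cong) (auto intro: sum.cong)

lemma sum_outflow_sq:
  assumes "valid_accept V nbrs L acc"
  shows "(\<Sum>u\<in>V. (outflow L acc u)^2) = (\<Sum>v\<in>V. case acc v of Some w \<Rightarrow> (prop_val L w v)^2 | None \<Rightarrow> 0)"
proof -
  have "(outflow L acc u)^2 = (\<Sum>v\<in>V. if acc v = Some u then (prop_val L u v)^2 else 0)" for u
    unfolding outflow_eq[OF assms] using accepted_proposal[OF assms]
    by (subst sum_if_unique[OF finite_V, of _ "target nbrs L u"]) auto
  then show ?thesis by (simp add: sum_by_receivers[OF assms])
qed

lemma sum_apply_transfers:
  assumes "valid_accept V nbrs L acc"
  shows "(\<Sum>u\<in>V. apply_transfers V L acc u) = (\<Sum>u\<in>V. L u)"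
proof -
  have "(\<Sum>u\<in>V. 1 * inflow L acc u) = (\<Sum>u\<in>V. 1 * outflow L acc u)"
    unfolding sum_mult_inflow sum_mult_outflow[OF assms] by simp
  then show ?thesis unfolding apply_transfers_eq by (simp add: sum.distrib sum_subtractf)
qed

lemma sum_squares_apply_transfers_le:
  assumes va: "valid_accept V nbrs L acc"
  shows "(\<Sum>u\<in>V. (apply_transfers V L acc u)^2) \<le> (\<Sum>u\<in>V. (L u)^2) - (\<Sum>v\<in>V. transfer_gain L acc v)"
proof -
  let ?i = "inflow L acc" and ?o = "outflow L acc"
  let ?by_receiver = "\<lambda>g. \<Sum>v\<in>V. case acc v of Some w \<Rightarrow> g w v | None \<Rightarrow> (0::int)"
  have "(\<Sum>u\<in>V. (apply_transfers V L acc u)^2)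
      \<le> (\<Sum>u\<in>V. (L u)^2 + 2 * (L u * ?i u) - 2 * (L u * ?o u) + ?i u * ?i u + (?o u)^2)"
    unfolding apply_transfers_eq
  proof (rule sum_mono)
    fix u
    have "0 \<le> ?i u * ?o u" using inflow_nonneg[OF va] outflow_nonneg[OF va] by simp
    then show "(L u + ?i u - ?o u)^2 \<le> (L u)^2 + 2 * (L u * ?i u) - 2 * (L u * ?o u) + ?i u * ?i u + (?o u)^2"
      by (simp add: power2_eq_square algebra_simps)
  qed
  also have "\<dots> = (\<Sum>u\<in>V. (L u)^2) + 2 * ?by_receiver (\<lambda>w v. prop_val L w v * L v)
      - 2 * ?by_receiver (\<lambda>w v. prop_val L w v * L w) + 2 * ?by_receiver (\<lambda>w v. (prop_val L w v)^2)"
  proof -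
    have "(\<Sum>u\<in>V. ?i u * ?i u) = ?by_receiver (\<lambda>w v. (prop_val L w v)^2)"
      unfolding sum_mult_inflow by (rule sum.cong) (auto simp: inflow_def power2_eq_square split: option.split)
    then show ?thesis
      unfolding sum.distrib sum_subtractf sum_distrib_left[symmetric] sum_mult_inflow
        sum_mult_outflow[OF va] sum_outflow_sq[OF va] by simp
  qed
  also have "\<dots> = (\<Sum>u\<in>V. (L u)^2) - (\<Sum>v\<in>V. transfer_gain L acc v)"
  proof -
    have "(\<Sum>v\<in>V. transfer_gain L acc v) = 2 * ?by_receiver (\<lambda>w v. prop_val L w v * L w)
       - 2 * ?by_receiver (\<lambda>w v. prop_val L w v * L v) - 2 * ?by_receiver (\<lambda>w v. (prop_val L w v)^2)"
      unfolding sum_distrib_left sum_subtractf[symmetric] transfer_gain_def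
      by (rule sum.cong) (auto simp: power2_eq_square algebra_simps split: option.split)
    then show ?thesis by simp
  qed
  finally show ?thesis .
qed

lemma transfer_gain_nonneg: "valid_accept V nbrs L acc \<Longrightarrow> transfer_gain L acc v \<ge> 0"
  unfolding transfer_gain_def by (cases "acc v") (auto dest!: accepted_proposal)

lemma transfer_gain_ge_two:
  assumes va: "valid_accept V nbrs L acc" and "acc v \<noteq> None"
  shows "transfer_gain L acc v \<ge> 2"
proof -
  from assms obtain w where a: "acc v = Some w" by auto
  from accepted_proposal[OF va a] have "prop_val L w v \<ge> 1" "L w - L v - prop_val L w v \<ge> 1" by auto
  then have "1 * 1 \<le> prop_val L w v * (L w - L v - prop_val L w v)" by (intro mult_mono) auto
  then show ?thesis unfolding transfer_gain_def a by simp
qed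

lemma transfer_gain_ge_inflow_sq:
  assumes va: "valid_accept V nbrs L acc"
  shows "2 * (inflow L acc v)^2 \<le> transfer_gain L acc v"
proof (cases "acc v")
  case (Some w)
  with accepted_proposal[OF va Some]
  have "prop_val L w v * prop_val L w v \<le> prop_val L w v * (L w - L v - prop_val L w v)"
    by (intro mult_left_mono) auto
  then show ?thesis unfolding transfer_gain_def inflow_def Some by (simp add: power2_eq_square)
qed (simp add: transfer_gain_def inflow_def)

lemma apply_transfers_le_Lmax:
  assumes va: "valid_accept V nbrs L acc" and u: "u \<in> V"
  shows "apply_transfers V L acc u \<le> Lmax V L"
proof -
  have "L u + inflow L acc u \<le> Lmax V L"
  proof (cases "acc u")
    case None
    with u show ?thesis by (simp add: inflow_def load_le_Lmax[OF finite_V])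
  next
    case (Some w)
    with accepted_proposal[OF va Some] load_le_Lmax[OF finite_V, of w L] show ?thesis
      by (simp add: inflow_def)
  qed
  with outflow_nonneg[OF va, of u] show ?thesis unfolding apply_transfers_eq by simp
qed

lemma apply_transfers_ge_Lmin:
  assumes va: "valid_accept V nbrs L acc" and u: "u \<in> V"
  shows "Lmin V L \<le> apply_transfers V L acc u"
proof -
  let ?t = "target nbrs L u"
  have "Lmin V L \<le> L u - outflow L acc u"
  proof (cases "?t \<in> V \<and> acc ?t = Some u")
    case False
    with u show ?thesis by (auto simp: outflow_eq[OF va] Lmin_le_load[OF finite_V])
  next
    case True
    with accepted_proposal[OF va, of ?t u] Lmin_le_load[OF finite_V, of ?t L] show ?thesis
      by (simp add: outflow_eq[OF va])
  qed
  with inflow_nonneg[OF va, of u] show ?thesis unfolding apply_transfers_eq by simp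
qed

lemma one_balanced_no_accept:
  assumes va: "valid_accept V nbrs L acc" and bal: "one_balanced E L"
  shows "acc u = None"
proof -
  have "\<not> proposes nbrs L w" if "w \<in> V" for w
    using bal that set_nbrs unfolding proposes_def one_balanced_def by fastforce
  with va show ?thesis unfolding valid_accept_def proposal_def by blast
qed

lemma one_balanced_apply_transfers:
  "valid_accept V nbrs L acc \<Longrightarrow> one_balanced E L \<Longrightarrow> apply_transfers V L acc = L"
  by (rule ext) (simp add: apply_transfers_eq inflow_def outflow_def one_balanced_no_accept)

lemma sum_transfer_gain_ge_two_if_unbalanced:
  assumes va: "valid_accept V nbrs L acc" and unbal: "\<not> one_balanced E L"
  shows "2 \<le> (\<Sum>v\<in>V. transfer_gain L acc v)"
proof -
  obtain x y where xy: "E x y" "L y \<le> L x - 2"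
  proof -
    from unbal obtain u v where "E u v" "\<bar>L u - L v\<bar> > 1" unfolding one_balanced_def by force
    with that edge_sym show thesis by (cases "L v \<le> L u") force+
  qed
  then have x: "x \<in> V" and pr: "proposes nbrs L x" using edge_in_V proposes_if_steep_edge by blast+
  have "2 \<le> transfer_gain L acc (target nbrs L x)"
    by (rule transfer_gain_ge_two[OF va proposal_received_accepts[OF va x pr]])
  also have "\<dots> \<le> (\<Sum>v\<in>V. transfer_gain L acc v)"
    using target_in_V[OF x pr] transfer_gain_nonneg[OF va] finite_V by (intro member_le_sum) auto
  finally show ?thesis .
qed

lemma steep_edge_levels_covered:
  assumes va: "valid_accept V nbrs L acc" and e: "E x y" and steep: "L y \<le> L x - 2"
    and level: "L y \<le> \<theta>" "\<theta> < L x"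
  shows "\<theta> \<in> {L (target nbrs L x) ..< L (target nbrs L x) + (2 * inflow L acc (target nbrs L x) + 1)}"
proof -
  let ?t = "target nbrs L x"
  have x: "x \<in> V" using e edge_in_V by blast
  have pr: "proposes nbrs L x" using proposes_if_steep_edge[OF e steep] .
  have "L ?t \<le> L y" using target_minimal[OF x pr] set_nbrs[OF x] e by auto
  obtain w where aw: "acc ?t = Some w" using proposal_received_accepts[OF va x pr] by auto
  have "prop_val L x ?t \<le> prop_val L w ?t"
    using accepted_proposal[OF va aw] x pr unfolding proposal_def by blast
  then have "L x - L ?t \<le> 2 * inflow L acc ?t + 1" unfolding inflow_def aw by (simp add: prop_val_eq_div)
  with level \<open>L ?t \<le> L y\<close> show ?thesis by auto
qed

text \<open>Every level crossed by the walk is crossed by a drop of 1 (contributing that level) or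
  by a steep drop, whose levels are covered by the inflow of the target of its upper node.\<close>
lemma walk_drop_le_inflow:
  assumes va: "valid_accept V nbrs L acc" and walk: "walk E xs" and len: "length xs = Suc k"
  shows "\<exists>R\<subseteq>V. card R \<le> k \<and> L (hd xs) - L (last xs) \<le> int k + 2 * (\<Sum>u\<in>R. inflow L acc u)"
proof -
  define A where "A = {i. i < k \<and> L (xs!i) - L (xs!Suc i) \<ge> 2}"
  define B where "B = {i. i < k \<and> L (xs!i) - L (xs!Suc i) = 1}"
  define R where "R = (\<lambda>i. target nbrs L (xs!i)) ` A"
  define S where "S = (\<lambda>i. L (xs!Suc i)) ` B"
  let ?I = "\<lambda>u. {L u ..< L u + (2 * inflow L acc u + 1)}"
  have edge: "\<And>i. i < k \<Longrightarrow> E (xs!i) (xs!Suc i)" using walk len unfolding walk_def by auto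
  have RV: "R \<subseteq> V" unfolding R_def A_def by (auto intro: steep_edge_target_in_V[OF edge])
  have cover: "{L (last xs) ..< L (hd xs)} \<subseteq> (\<Union>u\<in>R. ?I u) \<union> S"
  proof
    fix \<theta> assume "\<theta> \<in> {L (last xs) ..< L (hd xs)}"
    then have "\<exists>i. Suc i < length xs \<and> L (xs ! Suc i) \<le> \<theta> \<and> \<theta> < L (xs ! i)"
      using len by (intro list_threshold_crossing) auto
    then obtain i where i: "Suc i < length xs" "L (xs ! Suc i) \<le> \<theta>" "\<theta> < L (xs ! i)" by blast
    then have "i < k" using len by simp
    show "\<theta> \<in> (\<Union>u\<in>R. ?I u) \<union> S"
    proof (cases "L (xs!i) - L (xs!Suc i) \<ge> 2")
      case True
      then have "target nbrs L (xs!i) \<in> R" using \<open>i < k\<close> unfolding R_def A_def by auto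
      with steep_edge_levels_covered[OF va edge[OF \<open>i < k\<close>] _ i(2,3)] True show ?thesis by auto
    next
      case False
      with i \<open>i < k\<close> have "i \<in> B" "\<theta> = L (xs!Suc i)" unfolding B_def by auto
      then show ?thesis unfolding S_def by auto
    qed
  qed
  have "finite R" "finite S" unfolding R_def S_def A_def B_def by auto
  with cover have "L (hd xs) - L (last xs) \<le> (\<Sum>u\<in>R. 2 * inflow L acc u + 1) + int (card S)"
    using inflow_nonneg[OF va] by (intro interval_length_le_card_cover) auto
  also have "\<dots> = 2 * (\<Sum>u\<in>R. inflow L acc u) + int (card R) + int (card S)"
    by (simp add: sum.distrib sum_distrib_left)
  finally have drop: "L (hd xs) - L (last xs) \<le> 2 * (\<Sum>u\<in>R. inflow L acc u) + int (card R) + int (card S)" .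
  have "card R + card S \<le> card A + card B"
    unfolding R_def S_def by (intro add_mono card_image_le) (auto simp: A_def B_def)
  also have "\<dots> = card (A \<union> B)" by (rule card_Un_disjoint[symmetric]) (auto simp: A_def B_def)
  also have "\<dots> \<le> k" using card_mono[of "{..<k}" "A \<union> B"] by (auto simp: A_def B_def)
  finally show ?thesis using RV drop by (intro exI[of _ R]) auto
qed

lemma sq_walk_drop_le_transfer_gain:
  assumes va: "valid_accept V nbrs L acc" and walk: "walk E xs" and len: "length xs = Suc k"
    and steep: "2 * int k \<le> L (hd xs) - L (last xs)"
  shows "(L (hd xs) - L (last xs))^2 \<le> 8 * int k * (\<Sum>v\<in>V. transfer_gain L acc v)"
proof -
  define K where "K = L (hd xs) - L (last xs)"
  let ?q = "inflow L acc"
  obtain R where R: "R \<subseteq> V" "card R \<le> k" and drop: "K \<le> int k + 2 * (\<Sum>u\<in>R. ?q u)"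
    using walk_drop_le_inflow[OF va walk len] unfolding K_def by blast
  have fin: "finite R" using R(1) finite_V finite_subset by blast
  have "2 * (\<Sum>u\<in>R. (?q u)^2) \<le> (\<Sum>u\<in>R. transfer_gain L acc u)" (is "?l \<le> ?r")
    unfolding sum_distrib_left by (intro sum_mono transfer_gain_ge_inflow_sq[OF va])
  then have gain: "16 * (int k * (\<Sum>u\<in>R. (?q u)^2)) \<le> 8 * int k * (\<Sum>u\<in>R. transfer_gain L acc u)"
    using mult_left_mono[of ?l ?r "8 * int k"] by (simp add: algebra_simps)
  have "K^2 \<le> (2 * (K - int k))^2" using steep unfolding K_def by (intro power_mono) auto
  also have "\<dots> \<le> (4 * (\<Sum>u\<in>R. ?q u))^2" using drop steep unfolding K_def by (intro power_mono) auto
  also have "\<dots> = 16 * (\<Sum>u\<in>R. ?q u)^2" by (simp add: power2_eq_square)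
  also have "\<dots> \<le> 16 * (int (card R) * (\<Sum>u\<in>R. (?q u)^2))"
    using square_sum_le_card_mult_sum_squares[OF fin] by simp
  also have "\<dots> \<le> 16 * (int k * (\<Sum>u\<in>R. (?q u)^2))"
    using R(2) by (intro mult_left_mono mult_right_mono sum_nonneg) auto
  also have "\<dots> \<le> 8 * int k * (\<Sum>u\<in>R. transfer_gain L acc u)" by (fact gain)
  also have "\<dots> \<le> 8 * int k * (\<Sum>v\<in>V. transfer_gain L acc v)"
    using R(1) finite_V transfer_gain_nonneg[OF va] by (intro mult_left_mono sum_mono2) auto
  finally show ?thesis unfolding K_def .
qed

end

subsection \<open>The two-phase potential argument\<close>

locale potential_descent =
  fixes \<Phi> G :: "nat \<Rightarrow> real" and K :: "nat \<Rightarrow> int" and balanced :: "nat \<Rightarrow> bool" and n D :: nat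
  assumes n_ge_2: "n \<ge> 2" and D_ge_1: "D \<ge> 1"
    and potential_step: "\<And>t. \<Phi> (Suc t) \<le> \<Phi> t - G t"
    and K_nonneg: "\<And>t. K t \<ge> 0"
    and gain_ge_K_sq: "\<And>t. 2 * int D \<le> K t \<Longrightarrow> real_of_int (K t)^2 \<le> 8 * real D * G t"
    and gain_ge_2: "\<And>t. \<not> balanced t \<Longrightarrow> 2 \<le> G t"
    and potential_le: "\<And>t. \<Phi> t \<le> real n * real_of_int (K t)^2"
    and potential_ge: "\<And>t. real_of_int (K t)^2 / 2 \<le> \<Phi> t"
begin

definition rate :: real where "rate = 1 / (8 * real n * real D)"

lemma rate_bounds: "0 < rate" "rate < 1"
proof -
  have "real n * real D \<ge> 2" using n_ge_2 D_ge_1 mult_mono[of 2 n 1 D] by (simp flip: of_nat_mult)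
  then show "0 < rate" "rate < 1" unfolding rate_def by (auto simp: field_simps)
qed

lemma potential_nonneg: "0 \<le> \<Phi> t"
  using potential_ge[of t] zero_le_power2[of "real_of_int (K t)"] by linarith

lemma potential_contracts:
  assumes "2 * int D \<le> K t"
  shows "\<Phi> (Suc t) \<le> (1 - rate) * \<Phi> t"
proof -
  have "\<Phi> t \<le> real n * (8 * real D * G t)"
    using potential_le[of t] gain_ge_K_sq[OF assms] mult_left_mono[of _ _ "real n"] by fastforce
  then have "rate * \<Phi> t \<le> G t" using n_ge_2 D_ge_1 unfolding rate_def by (simp add: field_simps)
  with potential_step[of t] show ?thesis by (simp add: algebra_simps)
qed

lemma potential_geometric:
  "(\<And>s. s < t \<Longrightarrow> 2 * int D \<le> K s) \<Longrightarrow> \<Phi> t \<le> (1 - rate)^t * \<Phi> 0"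
proof (induction t)
  case (Suc t)
  then have "\<Phi> (Suc t) \<le> (1 - rate) * \<Phi> t" by (intro potential_contracts) auto
  also have "\<dots> \<le> (1 - rate) * ((1 - rate)^t * \<Phi> 0)"
    using Suc rate_bounds by (intro mult_left_mono) auto
  finally show ?case by simp
qed simp

lemma contraction_phase_length:
  assumes "\<And>s. s \<le> t \<Longrightarrow> 2 * int D \<le> K s"
  shows "real t \<le> 8 * real n * real D * ln (real n * real_of_int (K 0)^2 / (2 * real D^2))"
    (is "_ \<le> _ * ln ?X")
proof -
  have "?X > 0" using assms[of 0] n_ge_2 D_ge_1 by (intro divide_pos_pos mult_pos_pos) auto
  have "(2 * real D)^2 \<le> real_of_int (K t)^2" using assms[of t] by (intro power_mono) auto
  then have "2 * real D^2 \<le> \<Phi> t" using potential_ge[of t] by (simp add: power2_eq_square)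
  also have "\<Phi> t \<le> (1 - rate)^t * \<Phi> 0" using assms by (intro potential_geometric) auto
  also have "\<dots> \<le> (1 - rate)^t * (real n * real_of_int (K 0)^2)"
    using potential_le[of 0] rate_bounds by (intro mult_left_mono) auto
  finally have "1 \<le> (1 - rate)^t * ?X" using D_ge_1 by (simp add: field_simps)
  then have "0 \<le> ln ((1 - rate)^t * ?X)" by (rule ln_ge_zero)
  also have "\<dots> = ln ((1 - rate)^t) + ln ?X" using rate_bounds \<open>?X > 0\<close> by (intro ln_mult_pos) auto
  also have "\<dots> = real t * ln (1 - rate) + ln ?X" using rate_bounds by (simp add: ln_realpow)
  also have "\<dots> \<le> real t * (- rate) + ln ?X"
    using ln_one_minus_pos_upper_bound[of rate] rate_bounds by (intro add_right_mono mult_left_mono) auto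
  finally have "real t * rate \<le> ln ?X" by simp
  then show ?thesis using n_ge_2 D_ge_1 unfolding rate_def by (simp add: field_simps)
qed

lemma balanced_within_linear_phase:
  assumes "K t < 2 * int D"
  shows "\<exists>j < 2 * n * D^2. balanced (t + j)"
proof (rule ccontr)
  define N where "N = 2 * n * D^2"
  assume "\<not> (\<exists>j < 2 * n * D^2. balanced (t + j))"
  then have unbal: "\<And>j. j < N \<Longrightarrow> \<not> balanced (t + j)" unfolding N_def by blast
  have decrease: "j \<le> N \<Longrightarrow> \<Phi> (t + j) \<le> \<Phi> t - 2 * real j" for j
  proof (induction j)
    case (Suc j)
    then have "\<Phi> (t + j) \<le> \<Phi> t - 2 * real j" "2 \<le> G (t + j)" using gain_ge_2[OF unbal] by auto
    with potential_step[of "t + j"] show ?case by simp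
  qed simp
  have "real_of_int (K t) \<le> 2 * real D - 1" using assms by linarith
  then have "real_of_int (K t)^2 \<le> (2 * real D - 1)^2" using K_nonneg[of t] by (intro power_mono) auto
  then have "\<Phi> t \<le> real n * (2 * real D - 1)^2"
    using potential_le[of t] mult_left_mono[of _ _ "real n"] by fastforce
  also have "\<dots> < 2 * real N" unfolding N_def using n_ge_2 D_ge_1 by (simp add: power2_eq_square algebra_simps)
  finally have "\<Phi> (t + N) < 0" using decrease[of N] by simp
  with potential_nonneg[of "t + N"] show False by simp
qed

lemma discrepancy_eventually_small:
  "\<exists>T. K T < 2 * int D \<and> (\<forall>s<T. 2 * int D \<le> K s)"
proof -
  define X where "X = real n * real_of_int (K 0)^2 / (2 * real D^2)"
  have "\<exists>s. K s < 2 * int D"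
  proof (rule ccontr)
    assume "\<not> (\<exists>s. K s < 2 * int D)"
    then have "real (nat \<lceil>8 * real n * real D * ln X\<rceil> + 1) \<le> 8 * real n * real D * ln X"
      unfolding X_def by (intro contraction_phase_length) (auto simp: not_less)
    then show False by linarith
  qed
  then show ?thesis unfolding exists_least_iff[of "\<lambda>s. K s < 2 * int D"] by (auto simp: not_less)
qed

lemma ln_initial_ratio_le_ln_ceiling:
  assumes "2 * int D \<le> K 0"
  defines "X \<equiv> real n * real_of_int (K 0)^2 / (2 * real D^2)"
  shows "ln X \<le> ln (real_of_int \<lceil>X\<rceil>)" and "0 \<le> ln (real_of_int \<lceil>X\<rceil>)"
proof -
  have "(2 * real D)^2 \<le> real_of_int (K 0)^2" using assms(1) by (intro power_mono) auto
  then have "1 * (2 * real D)^2 \<le> real n * real_of_int (K 0)^2" using n_ge_2 by (intro mult_mono) auto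
  then have "2 * real D^2 \<le> real n * real_of_int (K 0)^2"
    by (simp add: power_mult_distrib) (use zero_le_power2[of "real D"] in linarith)
  then have "1 \<le> X" unfolding X_def using D_ge_1 by (simp add: field_simps)
  then show "ln X \<le> ln (real_of_int \<lceil>X\<rceil>)" by (subst ln_le_cancel_iff) auto
  show "0 \<le> ln (real_of_int \<lceil>X\<rceil>)"
    using \<open>1 \<le> X\<close> le_of_int_ceiling[of X] by (intro ln_ge_zero) linarith
qed

lemma balanced_within_bound:
  "\<exists>T. real T \<le> (if K 0 \<ge> 2 * int D
                  then (8 * real n * real D + 1) *
                         ln (real_of_int \<lceil>real n * real_of_int (K 0) ^ 2 / (2 * real D ^ 2)\<rceil>)
                       + 2 * real n * real D ^ 2
                  else 2 * real n * real D ^ 2) \<and> balanced T"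
proof (cases "K 0 \<ge> 2 * int D")
  case False
  then obtain j where j: "j < 2 * n * D^2" "balanced j" using balanced_within_linear_phase[of 0] by auto
  have "real j \<le> real (2 * n * D^2)" using j(1) by (intro of_nat_mono) simp
  with False j(2) show ?thesis by (intro exI[of _ j]) simp
next
  case True
  define X where "X = real n * real_of_int (K 0)^2 / (2 * real D^2)"
  obtain T1 where T1: "K T1 < 2 * int D" and before: "\<And>s. s < T1 \<Longrightarrow> 2 * int D \<le> K s"
    using discrepancy_eventually_small by blast
  with True have "T1 > 0" by (cases T1) auto
  then have "real (T1 - 1) \<le> 8 * real n * real D * ln X"
    unfolding X_def by (intro contraction_phase_length before) auto
  also have "\<dots> \<le> 8 * real n * real D * ln (real_of_int \<lceil>X\<rceil>)"
    using ln_initial_ratio_le_ln_ceiling(1)[OF True] unfolding X_def by (intro mult_left_mono) auto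
  finally have phase1: "real (T1 - 1) \<le> 8 * real n * real D * ln (real_of_int \<lceil>X\<rceil>)" .
  obtain j where j: "j < 2 * n * D^2" "balanced (T1 + j)" using balanced_within_linear_phase[OF T1] by auto
  have "real (T1 + j) \<le> real (T1 - 1 + 2 * n * D^2)" using j(1) \<open>T1 > 0\<close> by (intro of_nat_mono) linarith
  also have "\<dots> \<le> 8 * real n * real D * ln (real_of_int \<lceil>X\<rceil>) + 2 * real n * real D^2"
    using phase1 by simp
  also have "\<dots> \<le> (8 * real n * real D + 1) * ln (real_of_int \<lceil>X\<rceil>) + 2 * real n * real D^2"
    using ln_initial_ratio_le_ln_ceiling(2)[OF True] unfolding X_def by (simp add: distrib_right)
  finally show ?thesis using True j(2) unfolding X_def by (intro exI[of _ "T1 + j"]) auto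
qed

end

subsection \<open>Executions\<close>

locale balancing_execution = load_balancing +
  fixes Ls :: "nat \<Rightarrow> 'a loads" and accs :: "nat \<Rightarrow> 'a \<Rightarrow> 'a option"
  assumes connected: "connected_graph V E" and two_nodes: "card V \<ge> 2"
    and execution: "execution V nbrs Ls accs"
begin

lemma valid_accept_round: "valid_accept V nbrs (Ls t) (accs t)"
  and next_round: "Ls (Suc t) = apply_transfers V (Ls t) (accs t)"
  using execution unfolding execution_def by auto

lemma V_nonempty: "V \<noteq> {}"
  using two_nodes by auto

lemma total_load_invariant: "(\<Sum>u\<in>V. Ls t u) = (\<Sum>u\<in>V. Ls 0 u)"
  by (induction t) (simp_all add: next_round sum_apply_transfers[OF valid_accept_round])

definition mean :: real where "mean = real_of_int (\<Sum>u\<in>V. Ls 0 u) / real (card V)"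

lemma card_mult_mean: "real (card V) * mean = real_of_int (\<Sum>u\<in>V. Ls t u)"
  using two_nodes total_load_invariant[of t] unfolding mean_def by simp

definition potential :: "nat \<Rightarrow> real" where
  "potential t = (\<Sum>u\<in>V. (real_of_int (Ls t u) - mean)^2)"

definition round_gain :: "nat \<Rightarrow> real" where
  "round_gain t = real_of_int (\<Sum>v\<in>V. transfer_gain (Ls t) (accs t) v)"

lemma Lmax_step: "Lmax V (Ls (Suc t)) \<le> Lmax V (Ls t)"
  unfolding next_round Lmax_def[of V "apply_transfers V (Ls t) (accs t)"]
  using finite_V V_nonempty apply_transfers_le_Lmax[OF valid_accept_round] by (simp add: Max_le_iff)

lemma Lmin_step: "Lmin V (Ls t) \<le> Lmin V (Ls (Suc t))"
  unfolding next_round Lmin_def[of V "apply_transfers V (Ls t) (accs t)"]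
  using finite_V V_nonempty apply_transfers_ge_Lmin[OF valid_accept_round] by (simp add: Min_ge_iff)

lemma monotonic: "monotonic_execution V Ls accs"
  unfolding monotonic_execution_def using Lmax_step Lmin_step accepted_proposal[OF valid_accept_round]
  by force

lemma potential_step: "potential (Suc t) \<le> potential t - round_gain t"
proof -
  have potential_eq: "potential s = real_of_int (\<Sum>u\<in>V. (Ls s u)^2) - mean * real_of_int (\<Sum>u\<in>V. Ls 0 u)"
    for s unfolding potential_def by (intro sum_sq_dev_eq card_mult_mean total_load_invariant)
  have "(\<Sum>u\<in>V. (Ls (Suc t) u)^2) \<le> (\<Sum>u\<in>V. (Ls t u)^2) - (\<Sum>v\<in>V. transfer_gain (Ls t) (accs t) v)"
    unfolding next_round by (rule sum_squares_apply_transfers_le[OF valid_accept_round])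
  then show ?thesis unfolding potential_eq round_gain_def by linarith
qed

lemma round_gain_ge_discrepancy_sq:
  assumes "2 * int (diameter V E) \<le> discrepancy V (Ls t)"
  shows "real_of_int (discrepancy V (Ls t))^2 \<le> 8 * real (diameter V E) * round_gain t"
proof -
  obtain x y where x: "x \<in> V" "Ls t x = Lmax V (Ls t)" and y: "y \<in> V" "Ls t y = Lmin V (Ls t)"
    using Lmax_attained[OF finite_V V_nonempty] Lmin_attained[OF finite_V V_nonempty] by blast
  obtain xs where xs: "walk E xs" "hd xs = x" "last xs = y" "length xs = Suc (gdist E x y)"
    using shortest_walk_exists[OF connected x(1) y(1)] by blast
  have dist: "gdist E x y \<le> diameter V E" by (rule gdist_le_diameter[OF finite_V x(1) y(1)])
  have drop: "Ls t (hd xs) - Ls t (last xs) = discrepancy V (Ls t)"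
    unfolding discrepancy_def xs(2,3) x(2) y(2) ..
  have "(discrepancy V (Ls t))^2 \<le> 8 * int (gdist E x y) * (\<Sum>v\<in>V. transfer_gain (Ls t) (accs t) v)"
    using sq_walk_drop_le_transfer_gain[OF valid_accept_round[of t] xs(1,4)] drop assms dist by simp
  also have "\<dots> \<le> 8 * int (diameter V E) * (\<Sum>v\<in>V. transfer_gain (Ls t) (accs t) v)"
    using dist transfer_gain_nonneg[OF valid_accept_round] by (intro mult_right_mono sum_nonneg) auto
  finally have "real_of_int ((discrepancy V (Ls t))^2)
      \<le> real_of_int (8 * int (diameter V E) * (\<Sum>v\<in>V. transfer_gain (Ls t) (accs t) v))"
    by (simp only: of_int_le_iff)
  then show ?thesis unfolding round_gain_def by simp
qed

lemma round_gain_ge_two: "\<not> one_balanced E (Ls t) \<Longrightarrow> 2 \<le> round_gain t"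
  unfolding round_gain_def using sum_transfer_gain_ge_two_if_unbalanced[OF valid_accept_round]
  by (metis of_int_le_iff of_int_numeral)

lemma potential_descent:
  "potential_descent potential round_gain (\<lambda>t. discrepancy V (Ls t)) (\<lambda>t. one_balanced E (Ls t))
     (card V) (diameter V E)"
proof
  show "2 \<le> card V" by (fact two_nodes)
  show "1 \<le> diameter V E" by (rule diameter_ge_one[OF finite_V connected two_nodes])
  fix t
  show "potential (Suc t) \<le> potential t - round_gain t" by (rule potential_step)
  show "2 * int (diameter V E) \<le> discrepancy V (Ls t) \<Longrightarrow>
      real_of_int (discrepancy V (Ls t))^2 \<le> 8 * real (diameter V E) * round_gain t"
    by (rule round_gain_ge_discrepancy_sq)
  show "\<not> one_balanced E (Ls t) \<Longrightarrow> 2 \<le> round_gain t" by (rule round_gain_ge_two)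
  obtain x where "x \<in> V" using V_nonempty by blast
  then show "0 \<le> discrepancy V (Ls t)"
    using Lmin_le_load[OF finite_V, of x "Ls t"] load_le_Lmax[OF finite_V, of x "Ls t"]
    unfolding discrepancy_def by linarith
  show "potential t \<le> real (card V) * real_of_int (discrepancy V (Ls t))^2"
    unfolding potential_def by (rule sum_sq_dev_le_card_mult_discrepancy_sq[OF finite_V V_nonempty card_mult_mean])
  show "real_of_int (discrepancy V (Ls t))^2 / 2 \<le> potential t"
    unfolding potential_def by (rule half_discrepancy_sq_le_sum_sq_dev[OF finite_V V_nonempty])
qed

lemma balanced_state_is_final:
  assumes "one_balanced E (Ls T)" and "T \<le> t"
  shows "Ls t = Ls T"
  using assms(2)
proof (induction t rule: dec_induct)
  case (step m)
  with assms(1) have "one_balanced E (Ls m)" by simp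
  then have "Ls (Suc m) = Ls m" unfolding next_round by (rule one_balanced_apply_transfers[OF valid_accept_round])
  with step show ?case by simp
qed simp

end

theorem theorem2:
  fixes V :: "'a set" and E :: "'a \<Rightarrow> 'a \<Rightarrow> bool" and nbrs :: "'a \<Rightarrow> 'a list"
    and Ls :: "nat \<Rightarrow> 'a \<Rightarrow> int" and accs :: "nat \<Rightarrow> 'a \<Rightarrow> 'a option"
  assumes "graph V E" and "connected_graph V E" and "neighbor_order V E nbrs"
    and "card V \<ge> 2"
    and "\<forall>u\<in>V. Ls 0 u \<ge> 0"
    and "execution V nbrs Ls accs"
  shows "monotonic_execution V Ls accs \<and>
    (let n = card V; D = diameter V E; K = discrepancy V (Ls 0);
         bound = (if K \<ge> 2 * int D
                  then (8 * real n * real D + 1) *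
                         ln (real_of_int \<lceil>real n * real_of_int K ^ 2 / (2 * real D ^ 2)\<rceil>)
                       + 2 * real n * real D ^ 2
                  else 2 * real n * real D ^ 2)
     in \<exists>T::nat. real T \<le> bound \<and>
          (\<forall>t\<ge>T. one_balanced E (Ls t) \<and> (\<forall>u\<in>V. Ls t u = Ls T u)))"
proof -
  interpret balancing_execution V E nbrs Ls accs
    using assms(1-4,6) by unfold_locales
  obtain T where bound: "real T \<le> (if discrepancy V (Ls 0) \<ge> 2 * int (diameter V E)
                  then (8 * real (card V) * real (diameter V E) + 1) *
                         ln (real_of_int \<lceil>real (card V) * real_of_int (discrepancy V (Ls 0)) ^ 2
                           / (2 * real (diameter V E) ^ 2)\<rceil>)
                       + 2 * real (card V) * real (diameter V E) ^ 2
                  else 2 * real (card V) * real (diameter V E) ^ 2)"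
    and balanced: "one_balanced E (Ls T)"
    using potential_descent.balanced_within_bound[OF potential_descent] by blast
  have final: "\<forall>t\<ge>T. one_balanced E (Ls t) \<and> (\<forall>u\<in>V. Ls t u = Ls T u)"
  proof (intro allI impI)
    fix t assume "T \<le> t"
    with balanced balanced_state_is_final[OF balanced this]
    show "one_balanced E (Ls t) \<and> (\<forall>u\<in>V. Ls t u = Ls T u)" by simp
  qed
  show ?thesis unfolding Let_def by (intro conjI exI[of _ T] monotonic bound final)
qed

end
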